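(* Let $J:[0,1]\to[0,\infty)$ with $\int_{\mathbb{Z}_p}J(|x|_p)dx=1$ (extended by zero outside $\mathbb{Z}_p$) and $\boldsymbol{J}\varphi=J(|x|_p)\ast\varphi-\varphi$. For $l\ge1$ let $G_l=\mathbb{Z}_p/p^l\mathbb{Z}_p$ and let $\mathcal{D}_l(\mathbb{Z}_p)$ be the complex vector space spanned by $\{\Omega(p^l|x-I|_p)\}_{I\in G_l}$. Then $\boldsymbol{J}:\mathcal{D}_l(\mathbb{Z}_p)\to\mathcal{D}_l(\mathbb{Z}_p)$ is a well-defined operator, and, identifying $\varphi\in\mathcal{D}_l(\mathbb{Z}_p)$ with the column vector $[\varphi(I)]_{I\in G_l}$, the restriction of $\boldsymbol{J}$ to $\mathcal{D}_l(\mathbb{Z}_p)$ is given by the matrix $\boldsymbol{J}^{(l)}=[J^{(l)}_{I,K}]_{I,K\in G_l}$ with $J^{(l)}_{I,K}=p^{-l}J(|I-K|_p)$ if $I\neq K$, and $J^{(l)}_{I,I}=\int_{p^l\mathbb{Z}_p}J(|y|_p)dy-1$.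
   Context: $p$ is a fixed prime; Haar measure with $\int_{\mathbb{Z}_p}dx=1$. Elements of $G_l$ are represented by $p$-adic integers $I=I_0+I_1p+\dots+I_{l-1}p^{l-1}$, $I_j\in\{0,\dots,p-1\}$, and $\Omega(p^l|x-I|_p)$ is the characteristic function of the ball $I+p^l\mathbb{Z}_p$. *)

theory Defs
  imports "HOL-Probability.Probability" "HOL-Computational_Algebra.Primes"
begin

text \<open>p-adic integers are modelled by their digit sequences x :: nat => nat
  (x n \<in> {0..p-1} is the coefficient of p^n).  The normalized Haar measure on Z_p
  is the infinite product of uniform measures on the digits.\<close>

definition Zp :: "nat \<Rightarrow> (nat \<Rightarrow> nat) measure" where
  "Zp p = PiM UNIV (\<lambda>_. uniform_count_measure {..<p})"

definition zp_of_nat :: "nat \<Rightarrow> nat \<Rightarrow> (nat \<Rightarrow> nat)" where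
  "zp_of_nat p I = (\<lambda>n. I div p ^ n mod p)"

text \<open>Subtraction in Z_p: the n-th digit of x - y is determined by the truncations mod p^(n+1).\<close>
definition zp_sub :: "nat \<Rightarrow> (nat \<Rightarrow> nat) \<Rightarrow> (nat \<Rightarrow> nat) \<Rightarrow> (nat \<Rightarrow> nat)" where
  "zp_sub p x y = (\<lambda>n. nat ((((\<Sum>i\<le>n. int (x i) * int p ^ i) - (\<Sum>i\<le>n. int (y i) * int p ^ i))
                         mod (int p ^ (Suc n))) div (int p ^ n)))"

definition zp_norm :: "nat \<Rightarrow> (nat \<Rightarrow> nat) \<Rightarrow> real" where
  "zp_norm p x = (if (\<forall>n. x n = 0) then 0 else real p powr (- real (LEAST n. x n \<noteq> 0)))"

definition int_padic_norm :: "nat \<Rightarrow> int \<Rightarrow> real" where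
  "int_padic_norm p a = (if a = 0 then 0 else real p powr (- real (multiplicity (int p) a)))"

text \<open>Support of Omega(p^l |x - I|_p): the ball I + p^l Z_p.\<close>
definition zp_ball :: "nat \<Rightarrow> nat \<Rightarrow> nat \<Rightarrow> (nat \<Rightarrow> nat) set" where
  "zp_ball p l I = {x \<in> space (Zp p). zp_norm p (zp_sub p x (zp_of_nat p I)) \<le> real p powr (- real l)}"

definition zp_ideal :: "nat \<Rightarrow> nat \<Rightarrow> (nat \<Rightarrow> nat) set" where
  "zp_ideal p l = {y \<in> space (Zp p). zp_norm p y \<le> real p powr (- real l)}"

definition Jop :: "nat \<Rightarrow> (real \<Rightarrow> real) \<Rightarrow> ((nat \<Rightarrow> nat) \<Rightarrow> complex) \<Rightarrow> ((nat \<Rightarrow> nat) \<Rightarrow> complex)" where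
  "Jop p J \<phi> = (\<lambda>x. (\<integral>y. complex_of_real (J (zp_norm p (zp_sub p x y))) * \<phi> y \<partial>Zp p) - \<phi> x)"

text \<open>D_l(Z_p): complex span of the indicator functions of the balls I + p^l Z_p, I \<in> G_l
  (G_l represented by 0 <= I < p^l); functions are compared on Z_p.\<close>
definition Dl :: "nat \<Rightarrow> nat \<Rightarrow> ((nat \<Rightarrow> nat) \<Rightarrow> complex) set" where
  "Dl p l = {\<phi>. \<exists>c :: nat \<Rightarrow> complex. \<forall>x \<in> space (Zp p).
               \<phi> x = (\<Sum>I<p ^ l. c I * indicator (zp_ball p l I) x)}"

definition Jmat :: "nat \<Rightarrow> nat \<Rightarrow> (real \<Rightarrow> real) \<Rightarrow> nat \<Rightarrow> nat \<Rightarrow> real" where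
  "Jmat p l J I K = (if I = K
      then (\<integral>y. J (zp_norm p y) * indicator (zp_ideal p l) y \<partial>Zp p) - 1
      else real p powr (- real l) * J (int_padic_norm p (int I - int K)))"

end

theory Submission
  imports Defs "HOL-Number_Theory.Cong"
begin

text \<open>
  For digit sequences, \<open>|x - y|\<^sub>p = p\<^sup>-\<^sup>m\<close> where \<open>m\<close> is the first digit in which \<open>x\<close> and
  \<open>y\<close> differ, so the balls \<open>I + p\<^sup>l\<int>\<^sub>p\<close> are the cylinders fixing the first \<open>l\<close> digits and have
  measure \<open>p\<^sup>-\<^sup>l\<close>. Fix \<open>x\<close> in the ball of \<open>I\<close>. On the ball of \<open>K \<noteq> I\<close> the kernel
  \<open>J(|x - y|\<^sub>p)\<close> is constant, equal to \<open>J(|I - K|\<^sub>p)\<close>, because the first differing digit lies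
  below \<open>l\<close>; this gives the off-diagonal entries \<open>p\<^sup>-\<^sup>l J(|I - K|\<^sub>p)\<close>. On the ball of \<open>x\<close>
  itself, digitwise addition of \<open>x\<close> without carries preserves the Haar measure, maps
  \<open>p\<^sup>l\<int>\<^sub>p\<close> onto that ball and turns \<open>|x - y|\<^sub>p\<close> into \<open>|z|\<^sub>p\<close>, which gives the diagonal
  entry. Hence \<open>\<J>\<phi>(x)\<close> depends only on the ball containing \<open>x\<close>, so \<open>\<J>\<phi> \<in> \<D>\<^sub>l\<close>, and its value
  there is the corresponding row of \<open>J\<^sup>(\<^sup>l\<^sup>)\<close> applied to the coefficients of \<open>\<phi>\<close>.
\<close>

section \<open>The Haar measure on digit sequences\<close>

lemma prob_space_digits: "0 < p \<Longrightarrow> prob_space (uniform_count_measure {..<(p::nat)})"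
  by (rule prob_space_uniform_count_measure) auto

lemma product_prob_space_Zp:
  assumes "0 < (p::nat)" shows "product_prob_space (\<lambda>_::nat. uniform_count_measure {..<p})"
  using prob_space_digits[OF assms] by (rule product_prob_spaceI)

lemma space_Zp: "space (Zp p) = {x. \<forall>n. x n < p}"
  by (auto simp: Zp_def space_PiM space_uniform_count_measure PiE_def extensional_def)

lemma prob_space_Zp: "0 < p \<Longrightarrow> prob_space (Zp p)"
  unfolding Zp_def by (intro prob_space_PiM prob_space_digits)

lemma emeasure_Zp_finite:
  assumes "0 < p" shows "emeasure (Zp p) A < \<infinity>"
proof -
  interpret prob_space "Zp p" by (rule prob_space_Zp[OF assms])
  show ?thesis by (simp add: less_top[symmetric])
qed

lemma measurable_Zp_digit: "(\<lambda>x. g (x n)) \<in> measurable (Zp p) (count_space UNIV)"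
proof -
  have "(\<lambda>x. x n) \<in> measurable (Zp p) (uniform_count_measure {..<p})"
    unfolding Zp_def by (rule measurable_component_singleton) simp
  moreover have "g \<in> measurable (uniform_count_measure {..<p}) (count_space UNIV)"
    by (subst measurable_cong_sets[OF sets_uniform_count_measure_count_space refl]) simp
  ultimately show ?thesis by (rule measurable_compose)
qed

lemma measurable_Zp_component [measurable]: "(\<lambda>x. x n) \<in> measurable (Zp p) (count_space UNIV)"
  using measurable_Zp_digit[of "\<lambda>a. a"] by simp

lemma Zp_cylinder_eq_prod_emb:
  "{x \<in> space (Zp p). \<forall>i\<in>S. x i \<in> A i} = prod_emb UNIV (\<lambda>_. uniform_count_measure {..<p}) S (PiE S A)"
  by (auto simp: prod_emb_def Zp_def space_PiM)

lemma emeasure_Zp_cylinder: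
  assumes "0 < p" "finite S" "\<And>i. i \<in> S \<Longrightarrow> A i \<subseteq> {..<p}"
  shows "emeasure (Zp p) {x \<in> space (Zp p). \<forall>i\<in>S. x i \<in> A i} = (\<Prod>i\<in>S. ennreal (card (A i) / p))"
  unfolding Zp_cylinder_eq_prod_emb using assms unfolding Zp_def
  by (subst emeasure_PiM_emb)
     (auto intro!: prod.cong prob_space_digits simp: sets_uniform_count_measure
        emeasure_uniform_count_measure ennreal_of_nat_eq_real_of_nat divide_ennreal)

lemma measurable_Zp_digitwise:
  assumes "\<And>n. f n \<in> {..<p} \<rightarrow> {..<p}"
  shows "(\<lambda>x n. f n (x n)) \<in> measurable (Zp p) (Zp p)"
proof -
  have "(\<lambda>x n. f n (x n)) \<in> measurable (Zp p) (Pi\<^sub>M UNIV (\<lambda>_. uniform_count_measure {..<p}))"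
  proof (rule measurable_PiM_single)
    show "(\<lambda>x n. f n (x n)) \<in> space (Zp p) \<rightarrow> (UNIV \<rightarrow>\<^sub>E space (uniform_count_measure {..<p}))"
      using assms by (auto simp: space_Zp space_uniform_count_measure)
    fix A n
    show "{x \<in> space (Zp p). f n (x n) \<in> A} \<in> sets (Zp p)"
      using measurable_sets[OF measurable_Zp_digit[of "f n" n p], of A]
      by (simp add: vimage_def Int_def conj_commute)
  qed
  then show ?thesis by (simp only: Zp_def)
qed

lemma card_bij_betw_preimage:
  assumes "bij_betw g A B" and "F \<subseteq> B"
  shows "card {a \<in> A. g a \<in> F} = card F"
proof (rule bij_betw_same_card, rule bij_betw_subset[OF assms(1)])
  show "g ` {a \<in> A. g a \<in> F} = F"
    using assms unfolding bij_betw_def by blast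
qed auto

lemma distr_Zp_digitwise_bij:
  assumes p: "0 < p" and f: "\<And>n. bij_betw (f n) {..<p} {..<p}"
  shows "distr (Zp p) (Zp p) (\<lambda>x n. f n (x n)) = Zp p"
proof -
  let ?M = "\<lambda>_::nat. uniform_count_measure {..<p}"
  let ?f = "\<lambda>x n. f n (x n)"
  interpret product_prob_space ?M UNIV by (rule product_prob_space_Zp[OF p])
  have fmeas: "?f \<in> measurable (Zp p) (Zp p)"
    using f by (intro measurable_Zp_digitwise) (auto dest: bij_betw_imp_funcset)
  show ?thesis
    unfolding Zp_def
  proof (rule PiM_eq)
    fix S :: "nat set" and F assume S: "finite S" and F: "\<And>i. i \<in> S \<Longrightarrow> F i \<in> sets (?M i)"
    then have Fp: "\<And>i. i \<in> S \<Longrightarrow> F i \<subseteq> {..<p}" by (simp add: sets_uniform_count_measure)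
    let ?E = "prod_emb UNIV ?M S (PiE S F)"
    let ?pre = "\<lambda>i. {a \<in> {..<p}. f i a \<in> F i}"
    have card_pre: "card (?pre i) = card (F i)" if "i \<in> S" for i
      using f Fp[OF that] by (rule card_bij_betw_preimage)
    have "?E \<in> sets (Zp p)"
      unfolding Zp_def using S F by (intro sets_PiM_I) auto
    then have "emeasure (distr (Zp p) (Zp p) ?f) ?E = emeasure (Zp p) (?f -` ?E \<inter> space (Zp p))"
      by (rule emeasure_distr[OF fmeas])
    also have "?f -` ?E \<inter> space (Zp p) = {x \<in> space (Zp p). \<forall>i\<in>S. x i \<in> ?pre i}"
      unfolding Zp_cylinder_eq_prod_emb[symmetric] using f
      by (auto simp: space_Zp dest: bij_betw_imp_funcset)
    also have "emeasure (Zp p) \<dots> = (\<Prod>i\<in>S. ennreal (card (?pre i) / p))"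
      using p S by (intro emeasure_Zp_cylinder) auto
    also have "\<dots> = (\<Prod>i\<in>S. emeasure (?M i) (F i))"
      using Fp card_pre
      by (intro prod.cong refl) (simp add: emeasure_uniform_count_measure ennreal_of_nat_eq_real_of_nat divide_ennreal)
    finally show "emeasure (distr (Pi\<^sub>M UNIV ?M) (Pi\<^sub>M UNIV ?M) ?f) ?E = (\<Prod>i\<in>S. emeasure (?M i) (F i))"
      unfolding Zp_def .
  qed simp
qed

lemma bij_betw_add_mod:
  assumes "0 < (p::nat)" shows "bij_betw (\<lambda>a. (c + a) mod p) {..<p} {..<p}"
proof -
  have inj: "inj_on (\<lambda>a. (c + a) mod p) {..<p}"
    by (rule inj_onI) (metis cong_add_lcancel_nat cong_def lessThan_iff mod_less)
  moreover have "(\<lambda>a. (c + a) mod p) ` {..<p} = {..<p}"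
    using assms inj by (intro endo_inj_surj) auto
  ultimately show ?thesis by (simp add: bij_betw_def)
qed

section \<open>The first-difference distance\<close>

definition digit_dist :: "nat \<Rightarrow> (nat \<Rightarrow> nat) \<Rightarrow> (nat \<Rightarrow> nat) \<Rightarrow> real" where
  "digit_dist p x y = (if \<forall>n. x n = y n then 0 else real p powr - real (LEAST n. x n \<noteq> y n))"

lemma obtain_first_difference:
  fixes x y :: "nat \<Rightarrow> 'a"
  assumes "x \<noteq> y"
  obtains m where "\<forall>i<m. x i = y i" and "x m \<noteq> y m"
proof -
  have "\<exists>n. x n \<noteq> y n" using assms by auto
  then show ?thesis using that unfolding exists_least_iff[of "\<lambda>n. x n \<noteq> y n"] by blast
qed

lemma digit_dist_self [simp]: "digit_dist p x x = 0"
  by (simp add: digit_dist_def)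

lemma digit_dist_eqI:
  assumes "\<forall>i<m. x i = y i" and "x m \<noteq> y m"
  shows "digit_dist p x y = real p powr - real m"
proof -
  have "(LEAST n. x n \<noteq> y n) = m"
    using assms by (intro Least_equality) (auto simp: not_less[symmetric])
  with assms(2) show ?thesis by (auto simp: digit_dist_def)
qed

lemma digit_dist_nonneg: "0 \<le> digit_dist p x y"
  by (simp add: digit_dist_def)

lemma digit_dist_le_one: "0 < p \<Longrightarrow> digit_dist p x y \<le> 1"
  by (auto simp: digit_dist_def powr_minus_divide intro!: ge_one_powr_ge_zero)

lemma digit_dist_le_iff:
  assumes "1 < p"
  shows "digit_dist p x y \<le> real p powr - real l \<longleftrightarrow> (\<forall>n<l. x n = y n)"
proof (cases "x = y")
  case False
  then obtain m where below: "\<forall>i<m. x i = y i" and at: "x m \<noteq> y m"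
    by (rule obtain_first_difference)
  have "digit_dist p x y \<le> real p powr - real l \<longleftrightarrow> l \<le> m"
    using assms by (simp add: digit_dist_eqI[OF below at])
  also have "\<dots> \<longleftrightarrow> (\<forall>n<l. x n = y n)"
    using below at by (auto simp: not_le[symmetric])
  finally show ?thesis .
qed simp

text \<open>The ultrametric property, in the form showing that the kernel is constant on each ball
  not containing \<open>x\<close>.\<close>
lemma digit_dist_prefix_cong:
  assumes "\<forall>n<l. x n = a n" and "\<forall>n<l. y n = b n" and "\<exists>n<l. a n \<noteq> b n"
  shows "digit_dist p x y = digit_dist p a b"
proof -
  obtain m where below: "\<forall>i<m. a i = b i" and at: "a m \<noteq> b m"
    using assms(3) by (metis obtain_first_difference)
  have "m < l" using assms(3) below by (meson not_less order_less_le_trans)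
  with assms(1,2) below at show ?thesis by (simp add: digit_dist_eqI)
qed

text \<open>\<open>J\<close> is not assumed measurable; measurability comes from \<open>digit_dist p x\<close> taking only
  countably many values, each on a measurable set.\<close>
lemma measurable_digit_dist_comp: "(\<lambda>y. h (digit_dist p x y)) \<in> borel_measurable (Zp p)"
proof -
  let ?g = "\<lambda>y. if \<forall>n. x n = y n then None else Some (LEAST n. x n \<noteq> y n)"
  have "?g \<in> measurable (Zp p) (count_space UNIV)"
    by measurable
  then have "(\<lambda>y. (\<lambda>i. h (case i of None \<Rightarrow> 0 | Some m \<Rightarrow> real p powr - real m)) (?g y)) \<in> borel_measurable (Zp p)"
    by (rule measurable_compose) simp
  then show ?thesis by (simp add: digit_dist_def if_distrib)
qed

text \<open>Digitwise addition without carries is not the group law of \<open>\<int>\<^sub>p\<close>, but it preserves the Haar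
  measure and moves the distance to \<open>x\<close> to the norm, which is all the diagonal term needs.\<close>
definition digit_add :: "nat \<Rightarrow> (nat \<Rightarrow> nat) \<Rightarrow> (nat \<Rightarrow> nat) \<Rightarrow> (nat \<Rightarrow> nat)" where
  "digit_add p x z = (\<lambda>n. (x n + z n) mod p)"

lemma digit_add_eq_iff:
  assumes "x n < p" and "z n < p"
  shows "digit_add p x z n = x n \<longleftrightarrow> z n = 0"
proof (cases "x n + z n < p")
  case False
  with assms have "(x n + z n) mod p = x n + z n - p"
    by (simp add: le_mod_geq)
  with False assms show ?thesis by (simp add: digit_add_def)
qed (simp add: digit_add_def)

lemma digit_dist_digit_add:
  assumes "x \<in> space (Zp p)" and "z \<in> space (Zp p)"
  shows "digit_dist p x (digit_add p x z) = digit_dist p (\<lambda>_. 0) z"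
proof -
  have "x n = digit_add p x z n \<longleftrightarrow> 0 = z n" for n
    using digit_add_eq_iff[of x n p z] assms by (auto simp: space_Zp)
  then show ?thesis by (simp add: digit_dist_def)
qed

lemma distr_Zp_digit_add: "0 < p \<Longrightarrow> distr (Zp p) (Zp p) (digit_add p x) = Zp p"
  unfolding digit_add_def by (intro distr_Zp_digitwise_bij bij_betw_add_mod)

lemma measurable_digit_add: "0 < p \<Longrightarrow> digit_add p x \<in> measurable (Zp p) (Zp p)"
  unfolding digit_add_def by (intro measurable_Zp_digitwise) auto

section \<open>The \<open>p\<close>-adic norm in terms of digits\<close>

lemma zp_norm_eq_digit_dist: "zp_norm p z = digit_dist p (\<lambda>_. 0) z"
proof -
  have "(\<lambda>n. z n \<noteq> 0) = (\<lambda>n. 0 \<noteq> z n)" by auto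
  then show ?thesis by (auto simp: zp_norm_def digit_dist_def)
qed

lemma zp_sub_digit_eq_0:
  assumes "\<forall>i\<le>n. x i = y i"
  shows "zp_sub p x y n = 0"
proof -
  have "(\<Sum>i\<le>n. int (x i) * int p ^ i) = (\<Sum>i\<le>n. int (y i) * int p ^ i)"
    using assms by (intro sum.cong) auto
  then show ?thesis by (simp add: zp_sub_def)
qed

lemma zp_sub_first_difference:
  assumes "1 < p" and "x m < p" "y m < p" and "\<forall>i<m. x i = y i" and "x m \<noteq> y m"
  shows "zp_sub p x y m \<noteq> 0"
proof -
  have "(\<Sum>i<m. int (x i) * int p ^ i) = (\<Sum>i<m. int (y i) * int p ^ i)"
    using assms(4) by (intro sum.cong) auto
  then have "(\<Sum>i\<le>m. int (x i) * int p ^ i) - (\<Sum>i\<le>m. int (y i) * int p ^ i)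
      = (int (x m) - int (y m)) * int p ^ m"
    by (simp add: lessThan_Suc_atMost[symmetric] algebra_simps)
  then have "zp_sub p x y m = nat ((int (x m) - int (y m)) mod int p)"
    using assms(1) by (simp add: zp_sub_def mod_mult_mult2 mult.commute[of "int p"])
  moreover have "\<not> int p dvd int (x m) - int (y m)"
    using assms(2,3,5) dvd_imp_le_int[of "int (x m) - int (y m)" "int p"] by auto
  moreover have "0 \<le> (int (x m) - int (y m)) mod int p"
    using assms(1) by simp
  ultimately show ?thesis
    by (auto simp: dvd_eq_mod_eq_0)
qed

lemma zp_norm_zp_sub:
  assumes "1 < p" and "x \<in> space (Zp p)" and "y \<in> space (Zp p)"
  shows "zp_norm p (zp_sub p x y) = digit_dist p x y"
proof (cases "x = y")
  case True
  then show ?thesis by (simp add: zp_norm_def zp_sub_digit_eq_0)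
next
  case False
  then obtain m where below: "\<forall>i<m. x i = y i" and at: "x m \<noteq> y m"
    by (rule obtain_first_difference)
  have "0 = zp_sub p x y i" if "i < m" for i
    using below that by (intro zp_sub_digit_eq_0[symmetric]) auto
  moreover have "0 \<noteq> zp_sub p x y m"
    using zp_sub_first_difference[OF assms(1) _ _ below at] assms(2,3) by (auto simp: space_Zp)
  ultimately have "digit_dist p (\<lambda>_. 0) (zp_sub p x y) = real p powr - real m"
    by (intro digit_dist_eqI) auto
  then show ?thesis
    unfolding zp_norm_eq_digit_dist digit_dist_eqI[OF below at] .
qed

lemma zp_of_nat_in_space: "0 < p \<Longrightarrow> zp_of_nat p I \<in> space (Zp p)"
  by (simp add: space_Zp zp_of_nat_def)

lemma mod_power_eq_iff_digits:
  assumes "0 < p"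
  shows "I mod p ^ n = K mod p ^ n \<longleftrightarrow> (\<forall>i<n. zp_of_nat p I i = zp_of_nat p K i)"
proof (induction n)
  case (Suc n)
  have split: "a mod (p ^ n * p) = p ^ n * (a div p ^ n mod p) + a mod p ^ n" for a
    by (rule mod_mult2_eq)
  have low: "a mod (p ^ n * p) mod p ^ n = a mod p ^ n" for a
    by (simp add: mod_mod_cancel)
  have high: "a mod (p ^ n * p) div p ^ n = a div p ^ n mod p" for a
    using assms by (simp add: mod_mult2_eq)
  have "I mod p ^ Suc n = K mod p ^ Suc n
      \<longleftrightarrow> I mod p ^ n = K mod p ^ n \<and> I div p ^ n mod p = K div p ^ n mod p"
    unfolding power_Suc2 by (metis split low high)
  then show ?case
    using Suc.IH by (auto simp: zp_of_nat_def less_Suc_eq)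
qed simp

lemma zp_of_nat_prefix_inj:
  assumes "0 < p" and "I < p ^ l" "K < p ^ l" and "\<forall>i<l. zp_of_nat p I i = zp_of_nat p K i"
  shows "I = K"
  using mod_power_eq_iff_digits[OF assms(1), of I l K] assms by simp

lemma zp_of_nat_inj:
  assumes "1 < p" and "zp_of_nat p I = zp_of_nat p K"
  shows "I = K"
proof (rule zp_of_nat_prefix_inj)
  have "n < p ^ n" for n
  proof -
    have "(2::nat) ^ n \<le> p ^ n"
      using assms(1) by (intro power_mono) auto
    with less_exp[of n] show ?thesis by linarith
  qed
  moreover have "p ^ I \<le> p ^ (I + K)" and "p ^ K \<le> p ^ (I + K)"
    using assms(1) by (simp_all add: power_increasing)
  ultimately show "I < p ^ (I + K)" and "K < p ^ (I + K)"
    using order.strict_trans2 by blast+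
qed (use assms in auto)

lemma int_padic_norm_eq_digit_dist:
  assumes "1 < p"
  shows "int_padic_norm p (int I - int K) = digit_dist p (zp_of_nat p I) (zp_of_nat p K)"
proof (cases "I = K")
  case False
  then have "zp_of_nat p I \<noteq> zp_of_nat p K"
    using zp_of_nat_inj[OF assms] by blast
  then obtain m where below: "\<forall>i<m. zp_of_nat p I i = zp_of_nat p K i"
    and at: "zp_of_nat p I m \<noteq> zp_of_nat p K m"
    by (rule obtain_first_difference)
  have dvd_iff: "int p ^ n dvd int I - int K \<longleftrightarrow> I mod p ^ n = K mod p ^ n" for n
  proof -
    have "I mod p ^ n = K mod p ^ n \<longleftrightarrow> int I mod int p ^ n = int K mod int p ^ n"
      by (metis of_nat_eq_iff of_nat_mod of_nat_power)
    then show ?thesis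
      by (simp add: mod_eq_dvd_iff)
  qed
  have "multiplicity (int p) (int I - int K) = m"
  proof (rule multiplicity_eqI)
    have "0 < p" using assms by simp
    then show "int p ^ m dvd int I - int K" and "\<not> int p ^ Suc m dvd int I - int K"
      using below at unfolding dvd_iff mod_power_eq_iff_digits[OF \<open>0 < p\<close>] by (auto simp: less_Suc_eq)
  qed
  with False show ?thesis
    by (simp add: int_padic_norm_def digit_dist_eqI[OF below at])
qed (simp add: int_padic_norm_def)

definition zp_cylinder :: "nat \<Rightarrow> nat \<Rightarrow> (nat \<Rightarrow> nat) \<Rightarrow> (nat \<Rightarrow> nat) set" where
  "zp_cylinder p l a = {x \<in> space (Zp p). \<forall>n<l. x n = a n}"

lemma sets_zp_cylinder [measurable]: "zp_cylinder p l a \<in> sets (Zp p)"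
  unfolding zp_cylinder_def by measurable

lemma measure_zp_cylinder:
  assumes "0 < p" and "\<forall>n<l. a n < p"
  shows "measure (Zp p) (zp_cylinder p l a) = real p powr - real l"
proof -
  have "zp_cylinder p l a = {x \<in> space (Zp p). \<forall>i\<in>{..<l}. x i \<in> {a i}}"
    by (auto simp: zp_cylinder_def)
  then have "emeasure (Zp p) (zp_cylinder p l a) = (\<Prod>i<l. ennreal (card {a i} / p))"
    using assms emeasure_Zp_cylinder[of p "{..<l}" "\<lambda>i. {a i}"] by simp
  also have "\<dots> = ennreal (real p powr - real l)"
    using assms by (simp add: ennreal_power powr_minus powr_realpow power_one_over inverse_eq_divide)
  finally show ?thesis by (simp add: measure_def)
qed

lemma zp_ball_eq_cylinder: "1 < p \<Longrightarrow> zp_ball p l I = zp_cylinder p l (zp_of_nat p I)"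
  by (auto simp: zp_ball_def zp_cylinder_def zp_norm_zp_sub zp_of_nat_in_space digit_dist_le_iff)

lemma zp_ideal_eq_cylinder: "1 < p \<Longrightarrow> zp_ideal p l = zp_cylinder p l (\<lambda>_. 0)"
  by (auto simp: zp_ideal_def zp_cylinder_def zp_norm_eq_digit_dist digit_dist_le_iff)

lemma digit_add_in_zp_cylinder_iff:
  assumes "0 < p" and "x \<in> space (Zp p)" and "z \<in> space (Zp p)"
  shows "digit_add p x z \<in> zp_cylinder p l x \<longleftrightarrow> z \<in> zp_cylinder p l (\<lambda>_. 0)"
  using assms digit_add_eq_iff[of x _ p z]
  by (auto simp: zp_cylinder_def space_Zp digit_add_def)

lemma ex_zp_ball:
  assumes "1 < p" and "x \<in> space (Zp p)"
  shows "\<exists>I<p ^ l. x \<in> zp_ball p l I"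
proof -
  define prefix where "prefix I = restrict (zp_of_nat p I) {..<l}" for I
  have "inj_on prefix {..<p ^ l}"
  proof (rule inj_onI)
    fix I K assume "I \<in> {..<p ^ l}" "K \<in> {..<p ^ l}" "prefix I = prefix K"
    moreover from \<open>prefix I = prefix K\<close> have "\<forall>i<l. zp_of_nat p I i = zp_of_nat p K i"
      unfolding prefix_def by (metis lessThan_iff restrict_apply')
    ultimately show "I = K"
      using assms(1) by (intro zp_of_nat_prefix_inj[of p I l K]) auto
  qed
  moreover have "prefix ` {..<p ^ l} \<subseteq> {..<l} \<rightarrow>\<^sub>E {..<p}"
    using assms(1) unfolding prefix_def image_subset_iff restrict_PiE_iff by (simp add: zp_of_nat_def)
  ultimately have "prefix ` {..<p ^ l} = {..<l} \<rightarrow>\<^sub>E {..<p}"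
    by (intro card_subset_eq) (auto simp: finite_PiE card_image card_PiE)
  moreover have "restrict x {..<l} \<in> {..<l} \<rightarrow>\<^sub>E {..<p}"
    using assms(2) by (auto simp: space_Zp)
  ultimately obtain I where "I < p ^ l" "restrict x {..<l} = prefix I"
    by (metis imageE lessThan_iff)
  moreover from this(2) have "\<forall>n<l. x n = zp_of_nat p I n"
    unfolding prefix_def by (metis lessThan_iff restrict_apply')
  ultimately show ?thesis
    using assms by (auto simp: zp_ball_eq_cylinder zp_cylinder_def)
qed

lemma sum_indicator_zp_ball:
  assumes "1 < p" and "I < p ^ l" and "x \<in> zp_ball p l I"
  shows "(\<Sum>K<p ^ l. c K * indicator (zp_ball p l K) x) = (c I :: 'a :: semiring_1)"
proof -
  have "x \<in> zp_ball p l K \<longleftrightarrow> K = I" if "K < p ^ l" for K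
  proof
    assume "x \<in> zp_ball p l K"
    with assms(1,3) have "\<forall>i<l. zp_of_nat p K i = zp_of_nat p I i"
      by (simp add: zp_ball_eq_cylinder zp_cylinder_def)
    moreover have "0 < p" using assms(1) by simp
    ultimately show "K = I"
      using zp_of_nat_prefix_inj[of p K l I] assms(2) that by blast
  qed (use assms(3) in simp)
  then have "(\<Sum>K<p ^ l. c K * indicator (zp_ball p l K) x) = (\<Sum>K<p ^ l. if K = I then c I else 0)"
    by (intro sum.cong) auto
  with assms(2) show ?thesis by simp
qed

section \<open>The operator on \<open>\<D>\<^sub>l\<close>\<close>

lemma integrable_J_zp_norm:
  assumes "0 < p" and "\<forall>t\<in>{0..1}. J t \<ge> 0" and "(\<integral>\<^sup>+ z. ennreal (J (zp_norm p z)) \<partial>Zp p) < \<infinity>"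
  shows "integrable (Zp p) (\<lambda>z. J (zp_norm p z))"
proof (rule integrableI_nonneg)
  show "(\<lambda>z. J (zp_norm p z)) \<in> borel_measurable (Zp p)"
    unfolding zp_norm_eq_digit_dist by (rule measurable_digit_dist_comp)
  show "AE z in Zp p. 0 \<le> J (zp_norm p z)"
    using assms(1,2) digit_dist_nonneg digit_dist_le_one unfolding zp_norm_eq_digit_dist by auto
qed (use assms(3) in simp)

lemma has_bochner_integral_own_ball:
  assumes p: "1 < p" and "\<forall>t\<in>{0..1}. J t \<ge> 0" and "(\<integral>\<^sup>+ z. ennreal (J (zp_norm p z)) \<partial>Zp p) < \<infinity>"
    and x: "x \<in> space (Zp p)"
  shows "has_bochner_integral (Zp p) (\<lambda>y. J (digit_dist p x y) * indicator (zp_cylinder p l x) y)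
           (\<integral>z. J (zp_norm p z) * indicator (zp_ideal p l) z \<partial>Zp p)"
proof -
  let ?f = "\<lambda>y. J (digit_dist p x y) * indicator (zp_cylinder p l x) y"
  let ?g = "\<lambda>z. J (zp_norm p z) * indicator (zp_ideal p l) z"
  have p0: "0 < p" using p by simp
  have f_measurable: "?f \<in> borel_measurable (Zp p)"
    by (intro borel_measurable_times measurable_digit_dist_comp borel_measurable_indicator sets_zp_cylinder)
  have "integrable (Zp p) (\<lambda>z. indicator (zp_ideal p l) z *\<^sub>R J (zp_norm p z))"
    using assms p0 by (intro integrable_mult_indicator integrable_J_zp_norm) (simp_all add: zp_ideal_eq_cylinder)
  then have "has_bochner_integral (Zp p) ?g (integral\<^sup>L (Zp p) ?g)"
    by (intro has_bochner_integral_integrable) (simp add: mult.commute)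
  moreover have "?f (digit_add p x z) = ?g z" if z: "z \<in> space (Zp p)" for z
  proof -
    have "digit_add p x z \<in> zp_cylinder p l x \<longleftrightarrow> z \<in> zp_ideal p l"
      unfolding digit_add_in_zp_cylinder_iff[OF p0 x z] zp_ideal_eq_cylinder[OF p] ..
    then show ?thesis
      unfolding digit_dist_digit_add[OF x z] zp_norm_eq_digit_dist indicator_def by simp
  qed
  ultimately have "has_bochner_integral (Zp p) (\<lambda>z. ?f (digit_add p x z)) (integral\<^sup>L (Zp p) ?g)"
    using has_bochner_integral_cong[OF refl, of "Zp p" "\<lambda>z. ?f (digit_add p x z)" ?g] by blast
  then have "has_bochner_integral (distr (Zp p) (Zp p) (digit_add p x)) ?f (integral\<^sup>L (Zp p) ?g)"
    by (rule has_bochner_integral_distr[OF f_measurable measurable_digit_add[OF p0]])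
  then show ?thesis
    by (simp add: distr_Zp_digit_add[OF p0])
qed

lemma has_bochner_integral_other_ball:
  assumes p: "1 < p" and "I < p ^ l" "K < p ^ l" "I \<noteq> K" and x: "x \<in> zp_ball p l I"
  shows "has_bochner_integral (Zp p) (\<lambda>y. J (digit_dist p x y) * indicator (zp_ball p l K) y)
           (real p powr - real l * J (int_padic_norm p (int I - int K)))"
proof -
  let ?c = "J (int_padic_norm p (int I - int K))"
  have p0: "0 < p" using p by simp
  have differ: "\<exists>n<l. zp_of_nat p I n \<noteq> zp_of_nat p K n"
    using assms zp_of_nat_prefix_inj[of p I l K] by auto
  have integrand: "(\<lambda>y. J (digit_dist p x y) * indicator (zp_ball p l K) y)
      = (\<lambda>y. indicator (zp_ball p l K) y *\<^sub>R ?c)"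
  proof
    fix y
    show "J (digit_dist p x y) * indicator (zp_ball p l K) y = indicator (zp_ball p l K) y *\<^sub>R ?c"
    proof (cases "y \<in> zp_ball p l K")
      case True
      then have "digit_dist p x y = digit_dist p (zp_of_nat p I) (zp_of_nat p K)"
        using x p differ by (intro digit_dist_prefix_cong) (auto simp: zp_ball_eq_cylinder zp_cylinder_def)
      with True p show ?thesis
        by (simp add: int_padic_norm_eq_digit_dist)
    qed simp
  qed
  have "has_bochner_integral (Zp p) (\<lambda>y. indicator (zp_ball p l K) y *\<^sub>R ?c)
      (measure (Zp p) (zp_ball p l K) *\<^sub>R ?c)"
    using p by (intro has_bochner_integral_indicator emeasure_Zp_finite[OF p0]) (simp add: zp_ball_eq_cylinder)
  moreover have "measure (Zp p) (zp_ball p l K) = real p powr - real l"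
    using p p0 by (simp add: zp_ball_eq_cylinder measure_zp_cylinder zp_of_nat_def)
  ultimately show ?thesis
    unfolding integrand by simp
qed

lemma has_bochner_integral_Jmat:
  assumes p: "1 < p" and Jnn: "\<forall>t\<in>{0..1}. J t \<ge> 0"
    and Jfin: "(\<integral>\<^sup>+ z. ennreal (J (zp_norm p z)) \<partial>Zp p) < \<infinity>"
    and I: "I < p ^ l" and K: "K < p ^ l" and x: "x \<in> zp_ball p l I"
  shows "has_bochner_integral (Zp p) (\<lambda>y. J (digit_dist p x y) * indicator (zp_ball p l K) y)
           (Jmat p l J I K + (if K = I then 1 else 0))"
proof (cases "K = I")
  case True
  have "x \<in> space (Zp p)" and "zp_ball p l I = zp_cylinder p l x"
    using x p by (auto simp: zp_ball_eq_cylinder zp_cylinder_def)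
  with True show ?thesis
    using has_bochner_integral_own_ball[OF p Jnn Jfin, of x l] by (simp add: Jmat_def)
next
  case False
  then show ?thesis
    using has_bochner_integral_other_ball[OF p I K _ x, of J] by (simp add: Jmat_def)
qed

lemma Jop_on_zp_ball:
  assumes p: "1 < p" and Jnn: "\<forall>t\<in>{0..1}. J t \<ge> 0"
    and Jfin: "(\<integral>\<^sup>+ z. ennreal (J (zp_norm p z)) \<partial>Zp p) < \<infinity>"
    and \<phi>: "\<forall>y\<in>space (Zp p). \<phi> y = (\<Sum>K<p ^ l. c K * indicator (zp_ball p l K) y)"
    and I: "I < p ^ l" and x: "x \<in> zp_ball p l I"
  shows "Jop p J \<phi> x = (\<Sum>K<p ^ l. complex_of_real (Jmat p l J I K) * c K)"
proof -
  let ?F = "\<lambda>K y. J (digit_dist p x y) * indicator (zp_ball p l K) y"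
  let ?v = "\<Sum>K<p ^ l. c K * complex_of_real (Jmat p l J I K + (if K = I then 1 else 0))"
  have x_space: "x \<in> space (Zp p)"
    using x by (simp add: zp_ball_def)
  have integrand: "complex_of_real (J (zp_norm p (zp_sub p x y))) * \<phi> y
      = (\<Sum>K<p ^ l. c K * complex_of_real (?F K y))" if y: "y \<in> space (Zp p)" for y
  proof -
    have "complex_of_real (J (zp_norm p (zp_sub p x y))) * \<phi> y
        = (\<Sum>K<p ^ l. complex_of_real (J (digit_dist p x y)) * (c K * indicator (zp_ball p l K) y))"
      unfolding zp_norm_zp_sub[OF p x_space y] \<phi>[rule_format, OF y] sum_distrib_left ..
    also have "\<dots> = (\<Sum>K<p ^ l. c K * complex_of_real (?F K y))"
      by (intro sum.cong refl) (simp add: indicator_def)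
    finally show ?thesis .
  qed
  have "has_bochner_integral (Zp p) (\<lambda>y. \<Sum>K<p ^ l. c K * complex_of_real (?F K y)) ?v"
    using has_bochner_integral_Jmat[OF p Jnn Jfin I _ x]
    by (intro has_bochner_integral_sum has_bochner_integral_mult_right has_bochner_integral_of_real) simp
  then have "has_bochner_integral (Zp p) (\<lambda>y. complex_of_real (J (zp_norm p (zp_sub p x y))) * \<phi> y) ?v"
    using integrand has_bochner_integral_cong[OF refl, of "Zp p"
        "\<lambda>y. complex_of_real (J (zp_norm p (zp_sub p x y))) * \<phi> y"
        "\<lambda>y. \<Sum>K<p ^ l. c K * complex_of_real (?F K y)"] by blast
  then have "(\<integral>y. complex_of_real (J (zp_norm p (zp_sub p x y))) * \<phi> y \<partial>Zp p) = ?v"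
    by (rule has_bochner_integral_integral_eq)
  also have "?v = (\<Sum>K<p ^ l. complex_of_real (Jmat p l J I K) * c K + (if K = I then c I else 0))"
    by (intro sum.cong refl) (auto simp: algebra_simps)
  also have "\<dots> = (\<Sum>K<p ^ l. complex_of_real (Jmat p l J I K) * c K) + c I"
    using I by (simp add: sum.distrib)
  moreover have "\<phi> x = c I"
    using \<phi>[rule_format, OF x_space] sum_indicator_zp_ball[OF p I x] by (rule trans)
  ultimately show ?thesis
    by (simp add: Jop_def)
qed

lemma Jop_expansion:
  assumes p: "1 < p" and "\<forall>t\<in>{0..1}. J t \<ge> 0"
    and "(\<integral>\<^sup>+ z. ennreal (J (zp_norm p z)) \<partial>Zp p) < \<infinity>"
    and \<phi>: "\<forall>y\<in>space (Zp p). \<phi> y = (\<Sum>K<p ^ l. c K * indicator (zp_ball p l K) y)"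
  shows "\<forall>x\<in>space (Zp p). Jop p J \<phi> x
    = (\<Sum>I<p ^ l. (\<Sum>K<p ^ l. complex_of_real (Jmat p l J I K) * c K) * indicator (zp_ball p l I) x)"
proof
  fix x assume "x \<in> space (Zp p)"
  then obtain I where I: "I < p ^ l" and x: "x \<in> zp_ball p l I"
    using ex_zp_ball[OF p] by blast
  show "Jop p J \<phi> x
      = (\<Sum>I<p ^ l. (\<Sum>K<p ^ l. complex_of_real (Jmat p l J I K) * c K) * indicator (zp_ball p l I) x)"
    using Jop_on_zp_ball[OF assms I x] sum_indicator_zp_ball[OF p I x] by (rule trans[OF _ sym])
qed

lemma zp_of_nat_in_zp_ball: "1 < p \<Longrightarrow> zp_of_nat p I \<in> zp_ball p l I"
  by (simp add: zp_ball_eq_cylinder zp_cylinder_def zp_of_nat_in_space)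

lemma Dl_coefficient:
  fixes c :: "nat \<Rightarrow> 'a :: semiring_1"
  assumes "1 < p" and "\<forall>y\<in>space (Zp p). \<phi> y = (\<Sum>K<p ^ l. c K * indicator (zp_ball p l K) y)"
    and "K < p ^ l"
  shows "\<phi> (zp_of_nat p K) = c K"
proof -
  have "0 < p" using assms(1) by simp
  from assms(2)[rule_format, OF zp_of_nat_in_space[OF this, where I = K]]
    sum_indicator_zp_ball[OF assms(1,3) zp_of_nat_in_zp_ball[OF assms(1)], where c = c]
  show ?thesis by (rule trans)
qed

theorem lemma9:
  fixes p l :: nat and J :: "real \<Rightarrow> real"
  assumes "prime p" and "l \<ge> 1"
    and "\<forall>t\<in>{0..1}. J t \<ge> 0"
    and "(\<integral>\<^sup>+ x. ennreal (J (zp_norm p x)) \<partial>Zp p) = 1"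
  shows "(\<forall>\<phi>\<in>Dl p l. Jop p J \<phi> \<in> Dl p l) \<and>
         (\<forall>\<phi>\<in>Dl p l. \<forall>I<p ^ l.
            Jop p J \<phi> (zp_of_nat p I) =
              (\<Sum>K<p ^ l. complex_of_real (Jmat p l J I K) * \<phi> (zp_of_nat p K)))"
proof (intro conjI ballI allI impI)
  have p: "1 < p" using assms(1) by (rule prime_gt_1_nat)
  have "(\<integral>\<^sup>+ x. ennreal (J (zp_norm p x)) \<partial>Zp p) < \<infinity>"
    using assms(4) by simp
  note J = assms(3) this
  fix \<phi> assume "\<phi> \<in> Dl p l"
  then obtain c where \<phi>: "\<forall>y\<in>space (Zp p). \<phi> y = (\<Sum>K<p ^ l. c K * indicator (zp_ball p l K) y)"
    unfolding Dl_def by blast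
  show "Jop p J \<phi> \<in> Dl p l"
    using Jop_expansion[OF p J \<phi>] unfolding Dl_def mem_Collect_eq
    by (rule exI[of _ "\<lambda>I. \<Sum>K<p ^ l. complex_of_real (Jmat p l J I K) * c K"])
  show "Jop p J \<phi> (zp_of_nat p I) = (\<Sum>K<p ^ l. complex_of_real (Jmat p l J I K) * \<phi> (zp_of_nat p K))"
    if "I < p ^ l" for I
    unfolding Jop_on_zp_ball[OF p J \<phi> that zp_of_nat_in_zp_ball[OF p]]
    using Dl_coefficient[OF p \<phi>] by (intro sum.cong) auto
qed

end
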